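(* The relation $\ll_C$ on $\bar M$, defined by $\bar P \ll_C \bar Q$ if and only if $P^*\cap Q\neq\emptyset$, is a chronology on $\bar M$: it is transitive (if $\bar P\ll_C\bar Q$ and $\bar Q\ll_C\bar R$ then $\bar P\ll_C\bar R$) and irreflexive (there is no $\bar P\in\bar M$ with $\bar P\ll_C\bar P$).
   Context: Let $M$ be a strongly causal spacetime, i.e. a time-oriented Lorentzian manifold in which every point has a neighbourhood that no non-spacelike curve enters more than once. For $p,q\in M$ write $p\ll q$ if there is a future-directed timelike curve from $p$ to $q$. Set $I^+(p)=\{q:p\ll q\}$ and $I^-(p)=\{q:q\ll p\}$, and for $S\subset M$ set $I^\pm(S)=\bigcup_{s\in S}I^\pm(s)$. For a curve $\gamma$ (viewed as a point set) put $I^\pm[\gamma]=I^\pm(\gamma)$. A past-set is a set of the form $I^-(S)$ with $S\subset M$. An IP (indecomposable past-set) is a nonempty past-set that is not the union of two proper subsets which are themselves past-sets. Future-sets and IFs are defined dually. $\hat M$ is the set of IPs and $\check M$ the set of IFs. The IPs are exactly the sets $I^-[\gamma]$ for future-directed timelike curves $\gamma$, and dually for IFs. For an IP $P$, its common future is $f(P)=I^+(\{x\in M:P\subset I^-(x)\})$. For an IF $P^*$, its common past is $p(P^* )=I^-(\{x\in M:P^*\subset I^+(x)\})$. $R_{pf}\subset\hat M\times\check M$ is the set of pairs $(P,Q^* )$ satisfying both of the following: - $Q^*\subset f(P)$, and there is no IF $R^*\neq Q^*$ with $Q^*\subset R^*\subset f(P)$; - $P\subset p(Q^* )$, and there is no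 IP $R\neq P$ with $P\subset R\subset p(Q^* )$. The causal completion $\bar M$ is the set of pairs $\bar P=(P,P^* )$ such that one of the following holds: - (i) $(P,P^* )\in R_{pf}$; - (ii) $P=\emptyset$ and $P^*$ is an IF appearing in no pair of $R_{pf}$; - (iii) $P^*=\emptyset$ and $P$ is an IP appearing in no pair of $R_{pf}$. Elements of $\bar M$ are written $\bar P=(P,P^* )$, $\bar Q=(Q,Q^* )$, $\bar R=(R,R^* )$, and so on. *)

theory Defs
  imports Main
begin

text \<open>The spacetime is abstracted to a set of events (a type 'a) together with its
chronological relation ll (p ll q iff there is a future-directed timelike curve from p to q).\<close>

definition Ipast :: "('a \<Rightarrow> 'a \<Rightarrow> bool) \<Rightarrow> 'a set \<Rightarrow> 'a set" where
  "Ipast ll S = {q. \<exists>s\<in>S. ll q s}"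

definition Ifut :: "('a \<Rightarrow> 'a \<Rightarrow> bool) \<Rightarrow> 'a set \<Rightarrow> 'a set" where
  "Ifut ll S = {q. \<exists>s\<in>S. ll s q}"

definition past_set :: "('a \<Rightarrow> 'a \<Rightarrow> bool) \<Rightarrow> 'a set \<Rightarrow> bool" where
  "past_set ll A = (\<exists>S. A = Ipast ll S)"

definition future_set :: "('a \<Rightarrow> 'a \<Rightarrow> bool) \<Rightarrow> 'a set \<Rightarrow> bool" where
  "future_set ll A = (\<exists>S. A = Ifut ll S)"

definition IP :: "('a \<Rightarrow> 'a \<Rightarrow> bool) \<Rightarrow> 'a set \<Rightarrow> bool" where
  "IP ll P = (P \<noteq> {} \<and> past_set ll P \<and>
     \<not> (\<exists>A B. past_set ll A \<and> past_set ll B \<and> A \<subset> P \<and> B \<subset> P \<and> P = A \<union> B))"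

definition IF :: "('a \<Rightarrow> 'a \<Rightarrow> bool) \<Rightarrow> 'a set \<Rightarrow> bool" where
  "IF ll P = (P \<noteq> {} \<and> future_set ll P \<and>
     \<not> (\<exists>A B. future_set ll A \<and> future_set ll B \<and> A \<subset> P \<and> B \<subset> P \<and> P = A \<union> B))"

definition common_future :: "('a \<Rightarrow> 'a \<Rightarrow> bool) \<Rightarrow> 'a set \<Rightarrow> 'a set" where
  "common_future ll P = Ifut ll {x. P \<subseteq> Ipast ll {x}}"

definition common_past :: "('a \<Rightarrow> 'a \<Rightarrow> bool) \<Rightarrow> 'a set \<Rightarrow> 'a set" where
  "common_past ll F = Ipast ll {x. F \<subseteq> Ifut ll {x}}"

definition Rpf :: "('a \<Rightarrow> 'a \<Rightarrow> bool) \<Rightarrow> 'a set \<Rightarrow> 'a set \<Rightarrow> bool" where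
  "Rpf ll P Q = (IP ll P \<and> IF ll Q \<and>
     Q \<subseteq> common_future ll P \<and>
     (\<forall>R. IF ll R \<and> Q \<subseteq> R \<and> R \<subseteq> common_future ll P \<longrightarrow> R = Q) \<and>
     P \<subseteq> common_past ll Q \<and>
     (\<forall>R. IP ll R \<and> P \<subseteq> R \<and> R \<subseteq> common_past ll Q \<longrightarrow> R = P))"

definition causal_completion :: "('a \<Rightarrow> 'a \<Rightarrow> bool) \<Rightarrow> ('a set \<times> 'a set) set" where
  "causal_completion ll = {(P, F).
     Rpf ll P F
   \<or> (P = {} \<and> IF ll F \<and> \<not> (\<exists>P'. Rpf ll P' F))
   \<or> (F = {} \<and> IP ll P \<and> \<not> (\<exists>F'. Rpf ll P F'))}"

definition llC :: "'a set \<times> 'a set \<Rightarrow> 'a set \<times> 'a set \<Rightarrow> bool" where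
  "llC X Y = (snd X \<inter> fst Y \<noteq> {})"

definition strongly_causal_chronology :: "('a \<Rightarrow> 'a \<Rightarrow> bool) \<Rightarrow> bool" where
  "strongly_causal_chronology ll =
     ((\<forall>p q r. ll p q \<longrightarrow> ll q r \<longrightarrow> ll p r)
    \<and> (\<forall>p. \<not> ll p p)
    \<and> (\<forall>p q. ll p q \<longrightarrow> (\<exists>r. ll p r \<and> ll r q))
    \<and> (\<forall>p. (\<exists>q. ll p q) \<and> (\<exists>q. ll q p))
    \<and> (\<forall>p q. Ipast ll {p} = Ipast ll {q} \<longrightarrow> p = q)
    \<and> (\<forall>p q. Ifut ll {p} = Ifut ll {q} \<longrightarrow> p = q))"

end

theory Submission
  imports Defs
begin

(* For every element of the causal completion with components P and P*, each point of P
   chronologically precedes each point of P*: if both components are nonempty the pair lies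
   in R_pf, so P* lies in the common future of P. Transitivity follows because a point of
   P* \<inter> Q then precedes a point of Q* \<inter> R, and the past set R is closed downwards;
   irreflexivity because a point of P* \<inter> P would precede itself. *)

lemma strongly_causal_chronology_transp: "strongly_causal_chronology ll \<Longrightarrow> transp ll"
  unfolding strongly_causal_chronology_def by (auto intro: transpI)

lemma strongly_causal_chronology_irreflp: "strongly_causal_chronology ll \<Longrightarrow> irreflp ll"
  unfolding strongly_causal_chronology_def by (auto intro: irreflpI)

lemma past_set_downward_closed:
  assumes "transp ll" "past_set ll A" "b \<in> A" "ll a b"
  shows "a \<in> A"
  using assms unfolding past_set_def Ipast_def by (blast dest: transpD)

lemma past_set_empty: "past_set ll {}"
  unfolding past_set_def Ipast_def by auto

lemma common_future_above:
  assumes "transp ll" "x \<in> P" "y \<in> common_future ll P"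
  shows "ll x y"
  using assms unfolding common_future_def Ifut_def Ipast_def by (blast dest: transpD)

lemma causal_completion_Rpf:
  assumes "(P, F) \<in> causal_completion ll" "P \<noteq> {}" "F \<noteq> {}"
  shows "Rpf ll P F"
  using assms unfolding causal_completion_def by auto

lemma causal_completion_past_set:
  assumes "X \<in> causal_completion ll"
  shows "past_set ll (fst X)"
  using assms past_set_empty unfolding causal_completion_def Rpf_def IP_def by auto

lemma causal_completion_chronological:
  assumes "transp ll" "X \<in> causal_completion ll" "a \<in> fst X" "b \<in> snd X"
  shows "ll a b"
proof -
  obtain P F where X: "X = (P, F)" by fastforce
  with assms have "Rpf ll P F" by (auto intro: causal_completion_Rpf)
  then have "F \<subseteq> common_future ll P" unfolding Rpf_def by blast
  with assms X show ?thesis by (auto intro: common_future_above)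
qed

lemma llC_trans:
  assumes "transp ll" "X \<in> causal_completion ll" "Y \<in> causal_completion ll"
    "Z \<in> causal_completion ll" "llC X Y" "llC Y Z"
  shows "llC X Z"
proof -
  obtain a where a: "a \<in> snd X" "a \<in> fst Y" using \<open>llC X Y\<close> unfolding llC_def by blast
  obtain b where b: "b \<in> snd Y" "b \<in> fst Z" using \<open>llC Y Z\<close> unfolding llC_def by blast
  have "ll a b" using causal_completion_chronological[OF assms(1,3) a(2) b(1)] .
  then have "a \<in> fst Z"
    by (rule past_set_downward_closed[OF assms(1) causal_completion_past_set[OF assms(4)] b(2)])
  with a(1) show ?thesis unfolding llC_def by blast
qed

lemma llC_irrefl:
  assumes "transp ll" "irreflp ll" "X \<in> causal_completion ll"
  shows "\<not> llC X X"
proof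
  assume "llC X X"
  then obtain x where "x \<in> fst X" "x \<in> snd X" unfolding llC_def by blast
  with assms(1,3) have "ll x x" by (rule causal_completion_chronological)
  with \<open>irreflp ll\<close> show False by (simp add: irreflp_def)
qed

theorem theorem2:
  fixes ll :: "'a \<Rightarrow> 'a \<Rightarrow> bool"
  assumes "strongly_causal_chronology ll"
  shows "(\<forall>X\<in>causal_completion ll. \<forall>Y\<in>causal_completion ll. \<forall>Z\<in>causal_completion ll.
            llC X Y \<and> llC Y Z \<longrightarrow> llC X Z)
       \<and> \<not> (\<exists>X\<in>causal_completion ll. llC X X)"
  using llC_trans llC_irrefl
    strongly_causal_chronology_transp[OF assms] strongly_causal_chronology_irreflp[OF assms]
  by blast

end
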